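(* None of the groups $(\wr\mathbf{Z})^{\infty}$, $(\mathbf{Z}\wr)^{\infty}$, $(\wr\mathbf{Z}\wr)^{\infty}$ embeds in $W=\bigoplus_{i\in\mathbf{N}}W_i$.
   Context: Restricted wreath product: $A\wr\mathbf{Z}=(\bigoplus_{i\in\mathbf{Z}}A)\rtimes\mathbf{Z}$. $W_0=1$, $W_i=W_{i-1}\wr\mathbf{Z}$; $(\mathbf{Z}\wr)^{\infty}$ is the ascending union of the $W_i$ with $W_i$ embedded in $W_{i+1}$ as the index-$0$ base summand. For permutation groups $(K,X)$, $(L,Y)$, the permutation wreath product $K\wr L\le\mathrm{Sym}(X\times Y)$ is generated by $(x,y)\mapsto(x\kappa,y)$, $(x,y')\mapsto(x,y')$ for $y'\neq y$ ($\kappa\in K$, $y\in Y$) and $(x,y)\mapsto(x,y\lambda)$ ($\lambda\in L$); it is associative. $P_1=\mathbf{Z}$ on $\mathbf{Z}$ by translation, $P_{k+1}=\mathbf{Z}\wr P_k$ with $P_k$ the top group; $(\wr\mathbf{Z})^{\infty}$ is the ascending union of the $P_k$ (a permutation group). $(\wr\mathbf{Z}\wr)^{\infty}$ is the permutation wreath product $(\wr\mathbf{Z})^{\infty}\wr(\mathbf{Z}\wr)^{\infty}$, where $(\mathbf{Z}\wr)^{\infty}$ acts on itself by right multiplication. Equivalently (up to isomorphism): with $\alpha,\beta_0\in PL_o(I)$ given by $x\alpha=x/4$ on $[0,\frac14)$, $x-\frac3{16}$ on $[\frac14,\frac7{16})$, $4x-\frac32$ on $[\frac7{16},\frac9{16})$,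 $x+\frac3{16}$ on $[\frac9{16},\frac34)$, $\frac14x+\frac34$ on $[\frac34,1]$, and $x\beta_0=x$ on $[0,\frac7{16})$, $2x-\frac7{16}$ on $[\frac7{16},\frac{15}{32})$, $x+\frac1{32}$ on $[\frac{15}{32},\frac12)$, $\frac12x+\frac9{32}$ on $[\frac12,\frac9{16})$, $x$ on $[\frac9{16},1]$, and $\beta_k=\alpha^{-k}\beta_0\alpha^k$, the three groups are generated by $\{\beta_i:i<0\}$, $\{\beta_i:i\ge0\}$, $\{\beta_i:i\in\mathbf{Z}\}$ respectively. *)

theory Defs
  imports "HOL-Algebra.Algebra"
begin

text \<open>The unit interval and its group of bijections (composition; the group generated
  by elements of PL_o(I) inside it is the same as the one generated inside PL_o(I)).\<close>

definition unitI :: "real set" where "unitI = {0..1}"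

abbreviation SymI :: "(real \<Rightarrow> real) monoid" where "SymI \<equiv> BijGroup unitI"

definition alpha :: "real \<Rightarrow> real" where
  "alpha = (\<lambda>x\<in>unitI.
     if x < 1/4 then x / 4
     else if x < 7/16 then x - 3/16
     else if x < 9/16 then 4 * x - 3/2
     else if x < 3/4 then x + 3/16
     else x / 4 + 3/4)"

definition beta0 :: "real \<Rightarrow> real" where
  "beta0 = (\<lambda>x\<in>unitI.
     if x < 7/16 then x
     else if x < 15/32 then 2 * x - 7/16
     else if x < 1/2 then x + 1/32
     else if x < 9/16 then x / 2 + 9/32
     else x)"

text \<open>Paper (right actions): beta_k = alpha^(-k) beta_0 alpha^k, i.e. x beta_k = ((x alpha^(-k)) beta_0) alpha^k.
  In BijGroup the product f \<otimes> g is f \<circ> g (apply g first), so this is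
  alpha^k \<otimes> beta_0 \<otimes> alpha^(-k).\<close>
definition beta :: "int \<Rightarrow> real \<Rightarrow> real" where
  "beta k = (alpha [^]\<^bsub>SymI\<^esub> k) \<otimes>\<^bsub>SymI\<^esub> beta0 \<otimes>\<^bsub>SymI\<^esub> (alpha [^]\<^bsub>SymI\<^esub> (- k))"

definition gen_by :: "int set \<Rightarrow> (real \<Rightarrow> real) monoid" where
  "gen_by S = SymI\<lparr>carrier := generate SymI (beta ` S)\<rparr>"

definition wrZ_inf :: "(real \<Rightarrow> real) monoid" where
  "wrZ_inf = gen_by {i. i < 0}"

definition Zwr_inf :: "(real \<Rightarrow> real) monoid" where
  "Zwr_inf = gen_by {i. 0 \<le> i}"

definition wrZwr_inf :: "(real \<Rightarrow> real) monoid" where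
  "wrZwr_inf = gen_by UNIV"

text \<open>Uniform encoding: an element of W_i = W_(i-1) wr Z = (\<Oplus>_(k\<in>Z) W_(i-1)) \<rtimes> Z is a
  function u :: int list \<Rightarrow> int, where u [] is the Z (top) coordinate and
  (\<lambda>ys. u (k # ys)) encodes the k-th base coordinate in W_(i-1).
  Product in A wr Z: (f,m)(g,n) = (k \<mapsto> f k * g (k - m), m + n).\<close>

fun wmult :: "(int list \<Rightarrow> int) \<Rightarrow> (int list \<Rightarrow> int) \<Rightarrow> int list \<Rightarrow> int" where
  "wmult u v [] = u [] + v []"
| "wmult u v (k # xs) = wmult (\<lambda>ys. u (k # ys)) (\<lambda>ys. v ((k - u []) # ys)) xs"

definition Wr :: "nat \<Rightarrow> (int list \<Rightarrow> int) monoid" where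
  "Wr i = \<lparr>carrier = {u. finite {xs. u xs \<noteq> 0} \<and> (\<forall>xs. i \<le> length xs \<longrightarrow> u xs = 0)},
           monoid.mult = wmult, one = (\<lambda>_. 0)\<rparr>"

definition Wsum :: "(nat \<Rightarrow> int list \<Rightarrow> int) monoid" where
  "Wsum = \<lparr>carrier = {w. (\<forall>i. w i \<in> carrier (Wr i)) \<and> finite {i. w i \<noteq> (\<lambda>_. 0)}},
           monoid.mult = (\<lambda>v w i. wmult (v i) (w i)), one = (\<lambda>i _. 0)\<rparr>"

definition embeds :: "('a, 'c) monoid_scheme \<Rightarrow> ('b, 'd) monoid_scheme \<Rightarrow> bool" where
  "embeds G H \<longleftrightarrow> (\<exists>h. h \<in> hom G H \<and> inj_on h (carrier G))"

end

theory Submission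
  imports Defs
begin

text \<open>
  Each \<open>W\<^sub>i\<close> is solvable of derived length at most \<open>i\<close>: on a map that is multiplicative
  for \<open>wmult\<close>, the top coordinate is additive into \<open>\<int>\<close>, so it vanishes on commutators, and on
  its kernel the coordinates below the top are again multiplicative maps of smaller depth.
  An element of \<open>W\<close> has finitely many nonzero coordinates, so if \<open>G\<close> embeds in \<open>W\<close> and
  \<open>g \<in> G\<close>, then some \<open>N\<close> bounds the coordinates on which the image of \<open>g\<close> is nontrivial, and
  every element of the \<open>N\<close>-th derived set of \<open>G\<close> lying in the normal closure of \<open>g\<close> is \<open>1\<close>.

  In the groups generated by the \<open>beta j\<close> this fails: since \<open>beta (k + 1)\<close> moves the support
  of \<open>beta k\<close> off itself, a suitable \<open>n\<close>-fold nested commutator of \<open>beta k, \<dots>, beta (k + m)\<close>,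
  \<open>m = n (n + 1) / 2\<close>, still acts as \<open>beta k\<close> on the support of \<open>beta k\<close>, and it lies both in
  the \<open>n\<close>-th derived set and in the normal closures of \<open>beta k\<close> and of \<open>beta (k + m)\<close>.
\<close>

section \<open>Derived sets and maps into iterated wreath products\<close>

definition commutator :: "('a, 'b) monoid_scheme \<Rightarrow> 'a \<Rightarrow> 'a \<Rightarrow> 'a" where
  "commutator G a b = a \<otimes>\<^bsub>G\<^esub> b \<otimes>\<^bsub>G\<^esub> inv\<^bsub>G\<^esub> a \<otimes>\<^bsub>G\<^esub> inv\<^bsub>G\<^esub> b"

lemma commutator_in_derived_set: "a \<in> H \<Longrightarrow> b \<in> H \<Longrightarrow> commutator G a b \<in> derived_set G H"
  by (auto simp: commutator_def)

lemma (in group) iter_derived_set_subset: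
  "subgroup H G \<Longrightarrow> (derived_set G ^^ n) H \<subseteq> H"
  by (induction n) (simp_all add: derived_set_incl)

lemma (in group) mono_iter_derived_set:
  "K \<subseteq> H \<Longrightarrow> (derived_set G ^^ n) K \<subseteq> (derived_set G ^^ n) H"
  by (induction n) (auto dest: mono_derived_set)

lemma wmult_zero_left [simp]: "wmult (\<lambda>_. 0) v = v"
proof
  show "wmult (\<lambda>_. 0) v xs = v xs" for xs
    by (induction xs arbitrary: v) auto
qed

lemma wmult_zero_right [simp]: "wmult u (\<lambda>_. 0) = u"
proof
  show "wmult u (\<lambda>_. 0) xs = u xs" for xs
    by (induction xs arbitrary: u) auto
qed

lemma wmult_idem_eq_zero: "wmult u u = u \<Longrightarrow> u = (\<lambda>_. 0)"
proof
  show "wmult u u = u \<Longrightarrow> u xs = 0" for xs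
  proof (induction xs arbitrary: u)
    case Nil
    then show ?case by (metis add_cancel_right_left wmult.simps(1))
  next
    case (Cons k xs)
    have top: "u [] = 0"
      using fun_cong[OF Cons.prems, of "[]"] by simp
    have "wmult (\<lambda>ys. u (k # ys)) (\<lambda>ys. u (k # ys)) ys = u (k # ys)" for ys
      using fun_cong[OF Cons.prems, of "k # ys"] top by simp
    then show ?case using Cons.IH[of "\<lambda>ys. u (k # ys)"] by blast
  qed
qed

text \<open>Multiplicativity on a subset, with no condition on the values: the induction below
  restricts such maps to subgroups and passes to their coordinate maps \<open>\<lambda>x ys. \<rho> x (k # ys)\<close>.\<close>

definition wmult_hom_on :: "('a, 'b) monoid_scheme \<Rightarrow> 'a set \<Rightarrow> ('a \<Rightarrow> int list \<Rightarrow> int) \<Rightarrow> bool" where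
  "wmult_hom_on G S \<rho> \<longleftrightarrow> (\<forall>x\<in>S. \<forall>y\<in>S. \<rho> (x \<otimes>\<^bsub>G\<^esub> y) = wmult (\<rho> x) (\<rho> y))"

lemma wmult_hom_onD: "wmult_hom_on G S \<rho> \<Longrightarrow> x \<in> S \<Longrightarrow> y \<in> S \<Longrightarrow> \<rho> (x \<otimes>\<^bsub>G\<^esub> y) = wmult (\<rho> x) (\<rho> y)"
  by (simp add: wmult_hom_on_def)

lemma wmult_hom_on_Cons:
  "wmult_hom_on G S \<rho> \<Longrightarrow> wmult_hom_on G {x \<in> S. \<rho> x [] = 0} (\<lambda>x ys. \<rho> x (k # ys))"
  by (simp add: wmult_hom_on_def)

context group
begin

lemma wmult_hom_on_one:
  assumes S: "subgroup S G" and \<rho>: "wmult_hom_on G S \<rho>"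
  shows "\<rho> \<one> = (\<lambda>_. 0)"
proof (rule wmult_idem_eq_zero)
  have one: "\<one> \<in> S" by (rule subgroup.one_closed[OF S])
  have "wmult (\<rho> \<one>) (\<rho> \<one>) = \<rho> (\<one> \<otimes> \<one>)" by (rule wmult_hom_onD[OF \<rho> one one, symmetric])
  also have "\<one> \<otimes> \<one> = \<one>" by simp
  finally show "wmult (\<rho> \<one>) (\<rho> \<one>) = \<rho> \<one>" .
qed

lemma wmult_hom_on_inv:
  assumes S: "subgroup S G" and \<rho>: "wmult_hom_on G S \<rho>" and x: "x \<in> S"
  shows "wmult (\<rho> x) (\<rho> (inv x)) = (\<lambda>_. 0)"
proof -
  have "inv x \<in> S" by (rule subgroup.m_inv_closed[OF S x])
  then have "wmult (\<rho> x) (\<rho> (inv x)) = \<rho> (x \<otimes> inv x)" by (rule wmult_hom_onD[OF \<rho> x, symmetric])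
  also have "x \<otimes> inv x = \<one>" using x subgroup.subset[OF S] by auto
  finally show ?thesis using wmult_hom_on_one[OF S \<rho>] by simp
qed

lemma wmult_hom_on_top_mult:
  "wmult_hom_on G S \<rho> \<Longrightarrow> x \<in> S \<Longrightarrow> y \<in> S \<Longrightarrow> \<rho> (x \<otimes> y) [] = \<rho> x [] + \<rho> y []"
  by (simp add: wmult_hom_onD)

lemma wmult_hom_on_top_inv:
  assumes "subgroup S G" "wmult_hom_on G S \<rho>" "x \<in> S"
  shows "\<rho> (inv x) [] = - \<rho> x []"
  using fun_cong[OF wmult_hom_on_inv[OF assms], of "[]"] by simp

lemma top_kernel_subgroup:
  assumes S: "subgroup S G" and \<rho>: "wmult_hom_on G S \<rho>"
  shows "subgroup {x \<in> S. \<rho> x [] = 0} G"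
proof (rule subgroupI)
  show "{x \<in> S. \<rho> x [] = 0} \<subseteq> carrier G" using subgroup.subset[OF S] by blast
  have "\<one> \<in> S" by (rule subgroup.one_closed[OF S])
  then have "\<one> \<in> {x \<in> S. \<rho> x [] = 0}" using wmult_hom_on_one[OF S \<rho>] by simp
  then show "{x \<in> S. \<rho> x [] = 0} \<noteq> {}" by blast
next
  fix a assume "a \<in> {x \<in> S. \<rho> x [] = 0}"
  then have "a \<in> S" "\<rho> a [] = 0" by simp_all
  then show "inv a \<in> {x \<in> S. \<rho> x [] = 0}"
    using subgroup.m_inv_closed[OF S] wmult_hom_on_top_inv[OF S \<rho>] by simp
next
  fix a b assume "a \<in> {x \<in> S. \<rho> x [] = 0}" "b \<in> {x \<in> S. \<rho> x [] = 0}"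
  then have "a \<in> S" "\<rho> a [] = 0" "b \<in> S" "\<rho> b [] = 0" by simp_all
  then show "a \<otimes> b \<in> {x \<in> S. \<rho> x [] = 0}"
    using subgroup.m_closed[OF S] wmult_hom_on_top_mult[OF \<rho>] by simp
qed

lemma derived_set_subset_top_kernel:
  assumes S: "subgroup S G" and \<rho>: "wmult_hom_on G S \<rho>"
  shows "derived_set G S \<subseteq> {x \<in> S. \<rho> x [] = 0}"
proof
  fix c assume "c \<in> derived_set G S"
  then obtain a b where ab: "a \<in> S" "b \<in> S" and c: "c = a \<otimes> b \<otimes> inv a \<otimes> inv b"
    by blast
  have inv: "inv a \<in> S" "inv b \<in> S" using ab subgroup.m_inv_closed[OF S] by blast+
  have ab_S: "a \<otimes> b \<in> S" "a \<otimes> b \<otimes> inv a \<in> S"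
    using ab inv subgroup.m_closed[OF S] by blast+
  have "c \<in> S" unfolding c using ab_S(2) inv(2) subgroup.m_closed[OF S] by blast
  moreover have "\<rho> c [] = \<rho> a [] + \<rho> b [] + \<rho> (inv a) [] + \<rho> (inv b) []"
    unfolding c by (simp add: wmult_hom_on_top_mult[OF \<rho>] ab inv ab_S)
  moreover have "\<rho> (inv a) [] = - \<rho> a []" "\<rho> (inv b) [] = - \<rho> b []"
    using ab wmult_hom_on_top_inv[OF S \<rho>] by blast+
  ultimately show "c \<in> {x \<in> S. \<rho> x [] = 0}" by simp
qed

lemma wmult_hom_on_commutator:
  assumes \<rho>: "wmult_hom_on G (carrier G) \<rho>" and a: "a \<in> carrier G" "\<rho> a = (\<lambda>_. 0)"
    and y: "y \<in> carrier G"
  shows "\<rho> (commutator G a y) = (\<lambda>_. 0)" "\<rho> (commutator G y a) = (\<lambda>_. 0)"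
proof -
  have "\<rho> (inv a) = (\<lambda>_. 0)"
    using wmult_hom_on_inv[OF subgroup_self \<rho> a(1)] a(2) by simp
  moreover have "wmult (\<rho> y) (\<rho> (inv y)) = (\<lambda>_. 0)"
    by (rule wmult_hom_on_inv[OF subgroup_self \<rho> y])
  ultimately show "\<rho> (commutator G a y) = (\<lambda>_. 0)" "\<rho> (commutator G y a) = (\<lambda>_. 0)"
    using a y by (simp_all add: commutator_def wmult_hom_onD[OF \<rho>])
qed

lemma wmult_hom_on_iter_derived_set:
  assumes "subgroup S G" "wmult_hom_on G S \<rho>"
    and "\<And>x xs. x \<in> S \<Longrightarrow> i \<le> length xs \<Longrightarrow> \<rho> x xs = 0"
    and "i \<le> n" "x \<in> (derived_set G ^^ n) S"
  shows "\<rho> x = (\<lambda>_. 0)"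
  using assms
proof (induction i arbitrary: S \<rho> n x)
  case 0
  then have "x \<in> S" using iter_derived_set_subset by blast
  show ?case
  proof
    show "\<rho> x xs = 0" for xs using "0.prems"(3) \<open>x \<in> S\<close> by simp
  qed
next
  case (Suc i)
  obtain m where n: "n = Suc m" using \<open>Suc i \<le> n\<close> by (cases n) auto
  let ?S' = "{x \<in> S. \<rho> x [] = 0}"
  have S': "subgroup ?S' G" by (rule top_kernel_subgroup[OF Suc.prems(1,2)])
  have "x \<in> (derived_set G ^^ m) (derived_set G S)"
    using Suc.prems(5) unfolding n funpow_Suc_right o_apply .
  then have x: "x \<in> (derived_set G ^^ m) ?S'"
    using mono_iter_derived_set[OF derived_set_subset_top_kernel[OF Suc.prems(1,2)]] by blast
  then have "x \<in> ?S'" using iter_derived_set_subset[OF S'] by blast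
  then have top: "\<rho> x [] = 0" by simp
  have tail: "(\<lambda>ys. \<rho> x (k # ys)) = (\<lambda>_. 0)" for k
  proof (rule Suc.IH[OF S' wmult_hom_on_Cons[OF Suc.prems(2)] _ _ x])
    show "i \<le> m" using Suc.prems(4) n by simp
    show "\<rho> z (k # xs) = 0" if "z \<in> ?S'" "i \<le> length xs" for z xs
      using Suc.prems(3) that by simp
  qed
  show ?case
  proof
    show "\<rho> x xs = 0" for xs
      using top fun_cong[OF tail] by (cases xs) auto
  qed
qed

end

lemma Wsum_hom_component: "h \<in> hom G Wsum \<Longrightarrow> wmult_hom_on G (carrier G) (\<lambda>x. h x i)"
  by (simp add: hom_def Wsum_def wmult_hom_on_def)

lemma Wsum_component_vanishes: "w \<in> carrier Wsum \<Longrightarrow> i \<le> length xs \<Longrightarrow> w i xs = 0"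
  by (simp add: Wsum_def Wr_def)

lemma Wsum_finite_support:
  assumes "w \<in> carrier Wsum"
  obtains N where "\<And>i. N \<le> i \<Longrightarrow> w i = (\<lambda>_. 0)"
proof -
  have "finite {i. w i \<noteq> (\<lambda>_. 0)}" using assms by (simp add: Wsum_def)
  then obtain N where N: "\<And>i. w i \<noteq> (\<lambda>_. 0) \<Longrightarrow> i < N" using finite_nat_bounded by blast
  show ?thesis
  proof (rule that)
    show "w i = (\<lambda>_. 0)" if "N \<le> i" for i using N[of i] that by linarith
  qed
qed

text \<open>The condition on \<open>t\<close> stands in for membership in the normal closure of \<open>g\<close>.\<close>

lemma (in group) not_embeds_Wsum:
  assumes g: "g \<in> carrier G"
    and deep: "\<And>n. \<exists>t \<in> (derived_set G ^^ n) (carrier G). t \<noteq> \<one> \<and>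
      (\<forall>\<rho>. wmult_hom_on G (carrier G) \<rho> \<longrightarrow> \<rho> g = (\<lambda>_. 0) \<longrightarrow> \<rho> t = (\<lambda>_. 0))"
  shows "\<not> embeds G Wsum"
proof
  assume "embeds G Wsum"
  then obtain h where h: "h \<in> hom G Wsum" and inj: "inj_on h (carrier G)"
    by (auto simp: embeds_def)
  have hG: "h x \<in> carrier Wsum" if "x \<in> carrier G" for x
    using h that by (auto simp: hom_def)
  obtain N where N: "\<And>i. N \<le> i \<Longrightarrow> h g i = (\<lambda>_. 0)"
    using Wsum_finite_support[OF hG[OF g]] by metis
  from deep[of N] obtain t where t: "t \<in> (derived_set G ^^ N) (carrier G)" "t \<noteq> \<one>"
    and killed: "\<forall>\<rho>. wmult_hom_on G (carrier G) \<rho> \<longrightarrow> \<rho> g = (\<lambda>_. 0) \<longrightarrow> \<rho> t = (\<lambda>_. 0)"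
    by (elim bexE conjE)
  have tG: "t \<in> carrier G" using t(1) iter_derived_set_subset[OF subgroup_self] by blast
  have "h t i = h \<one> i" for i
  proof -
    have \<rho>: "wmult_hom_on G (carrier G) (\<lambda>x. h x i)" by (rule Wsum_hom_component[OF h])
    have "h t i = (\<lambda>_. 0)"
    proof (cases "N \<le> i")
      case True
      then show ?thesis using killed[rule_format, OF \<rho>] N[OF True] by simp
    next
      case False
      show ?thesis
      proof (rule wmult_hom_on_iter_derived_set[OF subgroup_self \<rho> _ _ t(1)])
        show "h x i xs = 0" if "x \<in> carrier G" "i \<le> length xs" for x xs
          using Wsum_component_vanishes[OF hG] that by blast
        show "i \<le> N" using False by simp
      qed
    qed
    then show ?thesis using wmult_hom_on_one[OF subgroup_self \<rho>] by simp
  qed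
  then have "h t = h \<one>" ..
  then have "t = \<one>" using inj tG by (simp add: inj_on_def)
  with t(2) show False ..
qed

section \<open>Commutators of permutations with disjoint supports\<close>

lemma Bij_apply_closed: "f \<in> Bij U \<Longrightarrow> x \<in> U \<Longrightarrow> f x \<in> U"
  using Bij_imp_funcset by blast

lemma Bij_inj: "f \<in> Bij U \<Longrightarrow> x \<in> U \<Longrightarrow> y \<in> U \<Longrightarrow> f x = f y \<Longrightarrow> x = y"
  by (auto simp: Bij_def bij_betw_def inj_on_def)

lemma carrier_BijGroup: "carrier (BijGroup U) = Bij U"
  by (simp add: BijGroup_def)

lemma BijGroup_mult_apply:
  "f \<in> Bij U \<Longrightarrow> g \<in> Bij U \<Longrightarrow> x \<in> U \<Longrightarrow> (f \<otimes>\<^bsub>BijGroup U\<^esub> g) x = f (g x)"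
  by (simp add: BijGroup_def compose_def)

lemma BijGroup_inv_apply:
  assumes "f \<in> Bij U" "x \<in> U"
  shows "f ((inv\<^bsub>BijGroup U\<^esub> f) x) = x" "(inv\<^bsub>BijGroup U\<^esub> f) (f x) = x"
    "(inv\<^bsub>BijGroup U\<^esub> f) x \<in> U"
proof -
  have f: "bij_betw f U U" using assms(1) by (simp add: Bij_def)
  have fx: "f x \<in> U" using Bij_apply_closed[OF assms] .
  show "f ((inv\<^bsub>BijGroup U\<^esub> f) x) = x" "(inv\<^bsub>BijGroup U\<^esub> f) (f x) = x"
    "(inv\<^bsub>BijGroup U\<^esub> f) x \<in> U"
    using assms fx bij_betw_inv_into_right[OF f] bij_betw_inv_into_left[OF f]
      Bij_inv_into_mem[OF assms(1)] by (simp_all add: inv_BijGroup)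
qed

lemma Bij_mult_closed: "f \<in> Bij U \<Longrightarrow> g \<in> Bij U \<Longrightarrow> f \<otimes>\<^bsub>BijGroup U\<^esub> g \<in> Bij U"
  by (simp add: BijGroup_def compose_Bij)

lemma Bij_inv_closed: "f \<in> Bij U \<Longrightarrow> inv\<^bsub>BijGroup U\<^esub> f \<in> Bij U"
  by (simp add: inv_BijGroup restrict_inv_into_Bij)

lemma commutator_BijGroup_apply:
  assumes "f \<in> Bij U" "g \<in> Bij U" "x \<in> U"
  shows "commutator (BijGroup U) f g x =
    f (g ((inv\<^bsub>BijGroup U\<^esub> f) ((inv\<^bsub>BijGroup U\<^esub> g) x)))"
  using assms by (simp add: commutator_def BijGroup_mult_apply Bij_mult_closed Bij_inv_closed
      BijGroup_inv_apply(3))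

lemma commutator_BijGroup_disjoint:
  assumes f: "f \<in> Bij U" and g: "g \<in> Bij U" and "S \<subseteq> U"
    and f_fix: "\<forall>x \<in> U - S. f x = x" and g_S: "\<forall>x \<in> S. g x \<notin> S"
  shows "\<forall>x \<in> S. commutator (BijGroup U) f g x = f x"
    and "\<forall>x \<in> U - (S \<union> g ` S). commutator (BijGroup U) f g x = x"
proof -
  have f_inv_fix: "(inv\<^bsub>BijGroup U\<^esub> f) y = y" if "y \<in> U - S" for y
    using BijGroup_inv_apply(2)[OF f, of y] f_fix that by simp
  have comm: "commutator (BijGroup U) f g x = f x"
    if "x \<in> U" "(inv\<^bsub>BijGroup U\<^esub> g) x \<notin> S" for x
  proof -
    let ?y = "(inv\<^bsub>BijGroup U\<^esub> g) x"
    have "?y \<in> U" "g ?y = x" using BijGroup_inv_apply[OF g \<open>x \<in> U\<close>] by simp_all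
    then show ?thesis
      using commutator_BijGroup_apply[OF f g \<open>x \<in> U\<close>] f_inv_fix that(2) by simp
  qed
  show "\<forall>x \<in> S. commutator (BijGroup U) f g x = f x"
  proof
    fix x assume "x \<in> S"
    show "commutator (BijGroup U) f g x = f x"
    proof (rule comm)
      show "x \<in> U" using \<open>x \<in> S\<close> \<open>S \<subseteq> U\<close> by blast
      then show "(inv\<^bsub>BijGroup U\<^esub> g) x \<notin> S"
        using g_S BijGroup_inv_apply(1)[OF g] \<open>x \<in> S\<close> by metis
    qed
  qed
  show "\<forall>x \<in> U - (S \<union> g ` S). commutator (BijGroup U) f g x = x"
  proof
    fix x assume x: "x \<in> U - (S \<union> g ` S)"
    then have "(inv\<^bsub>BijGroup U\<^esub> g) x \<notin> S"
      using BijGroup_inv_apply(1)[OF g] by (metis DiffE UnI2 image_eqI)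
    then have "commutator (BijGroup U) f g x = f x" using comm x by blast
    also have "f x = x" using f_fix x by blast
    finally show "commutator (BijGroup U) f g x = x" .
  qed
qed

section \<open>The homeomorphisms \<open>beta\<^sub>k\<close> and their nested commutators\<close>

lemma alpha_Bij: "alpha \<in> Bij unitI"
proof -
  have "bij_betw alpha unitI unitI"
    by (rule bij_betw_byWitness[where f' = "\<lambda>y. if y < 1/16 then 4 * y else if y < 1/4 then y + 3/16
        else if y < 3/4 then (y + 3/2) / 4 else if y < 15/16 then y - 3/16 else 4 * y - 3"])
      (auto simp: alpha_def unitI_def field_simps)
  then show ?thesis by (simp add: Bij_def alpha_def)
qed

lemma beta0_Bij: "beta0 \<in> Bij unitI"
proof -
  have "bij_betw beta0 unitI unitI"
    by (rule bij_betw_byWitness[where f' = "\<lambda>y. if y < 7/16 then y else if y < 1/2 then (y + 7/16) / 2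
        else if y < 17/32 then y - 1/32 else if y < 9/16 then 2 * y - 9/16 else y"])
      (auto simp: beta0_def unitI_def field_simps)
  then show ?thesis by (simp add: Bij_def beta0_def)
qed

definition alpha_pow :: "int \<Rightarrow> real \<Rightarrow> real" where
  "alpha_pow k = alpha [^]\<^bsub>SymI\<^esub> k"

lemma alpha_pow_Bij: "alpha_pow k \<in> Bij unitI"
  using group.int_pow_closed[OF group_BijGroup] alpha_Bij
  by (simp add: alpha_pow_def carrier_BijGroup)

lemma alpha_pow_succ_apply: "x \<in> unitI \<Longrightarrow> alpha_pow (k + 1) x = alpha_pow k (alpha x)"
proof -
  interpret group SymI by (rule group_BijGroup)
  have "alpha_pow (k + 1) = alpha_pow k \<otimes>\<^bsub>SymI\<^esub> alpha"
    using int_pow_mult[of alpha k 1] alpha_Bij by (simp add: alpha_pow_def carrier_BijGroup)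
  then show "x \<in> unitI \<Longrightarrow> alpha_pow (k + 1) x = alpha_pow k (alpha x)"
    by (simp add: BijGroup_mult_apply alpha_pow_Bij alpha_Bij)
qed

lemma beta_eq: "beta k = alpha_pow k \<otimes>\<^bsub>SymI\<^esub> beta0 \<otimes>\<^bsub>SymI\<^esub> inv\<^bsub>SymI\<^esub> alpha_pow k"
proof -
  interpret group SymI by (rule group_BijGroup)
  show ?thesis
    using int_pow_neg[of alpha k] alpha_Bij by (simp add: beta_def alpha_pow_def carrier_BijGroup)
qed

lemma beta_Bij: "beta k \<in> Bij unitI"
  by (simp add: beta_eq Bij_mult_closed Bij_inv_closed alpha_pow_Bij beta0_Bij)

lemma beta_alpha_pow: "z \<in> unitI \<Longrightarrow> beta k (alpha_pow k z) = alpha_pow k (beta0 z)"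
  using Bij_apply_closed[OF alpha_pow_Bij]
  by (simp add: beta_eq BijGroup_mult_apply Bij_mult_closed Bij_inv_closed alpha_pow_Bij beta0_Bij
      BijGroup_inv_apply(2))

definition beta0_supp :: "real set" where
  "beta0_supp = {7/16<..<9/16}"

definition beta_supp :: "int \<Rightarrow> real set" where
  "beta_supp k = alpha_pow k ` beta0_supp"

lemma beta0_supp_subset: "beta0_supp \<subseteq> unitI"
  by (auto simp: beta0_supp_def unitI_def)

lemma beta0_fixes: "x \<in> unitI - beta0_supp \<Longrightarrow> beta0 x = x"
  by (auto simp: beta0_def beta0_supp_def)

lemma beta0_maps_supp: "x \<in> beta0_supp \<Longrightarrow> beta0 x \<in> beta0_supp"
  by (auto simp: beta0_def beta0_supp_def unitI_def)

lemma beta0_half: "beta0 (1/2) \<noteq> 1/2"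
  by (simp add: beta0_def unitI_def)

text \<open>The middle piece of \<open>alpha\<close> stretches \<open>beta0_core\<close> onto \<open>beta0_supp\<close>, while
  \<open>beta0\<close> moves \<open>beta0_core\<close> off itself.\<close>

definition beta0_core :: "real set" where
  "beta0_core = {31/64<..<33/64}"

lemma alpha_image_core: "alpha ` beta0_core = beta0_supp"
proof
  show "alpha ` beta0_core \<subseteq> beta0_supp"
    by (auto simp: alpha_def unitI_def beta0_supp_def beta0_core_def)
  show "beta0_supp \<subseteq> alpha ` beta0_core"
  proof
    fix y assume "y \<in> beta0_supp"
    then have "(y + 3/2) / 4 \<in> beta0_core" "y = alpha ((y + 3/2) / 4)"
      by (auto simp: alpha_def unitI_def beta0_supp_def beta0_core_def field_simps)
    then show "y \<in> alpha ` beta0_core" by blast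
  qed
qed

lemma beta0_moves_core: "z \<in> beta0_core \<Longrightarrow> beta0 z \<notin> beta0_core"
  by (auto simp: beta0_def beta0_core_def unitI_def)

lemma beta0_core_subset: "beta0_core \<subseteq> beta0_supp"
  by (auto simp: beta0_supp_def beta0_core_def)

lemma beta_supp_subset: "beta_supp k \<subseteq> unitI"
  using Bij_apply_closed[OF alpha_pow_Bij] beta0_supp_subset by (auto simp: beta_supp_def)

lemma beta_supp_eq_core: "beta_supp k = alpha_pow (k + 1) ` beta0_core"
proof -
  have "alpha_pow (k + 1) ` beta0_core = alpha_pow k ` alpha ` beta0_core"
    using beta0_core_subset beta0_supp_subset
    by (auto simp: alpha_pow_succ_apply image_image intro!: image_cong)
  then show ?thesis by (simp add: alpha_image_core beta_supp_def)
qed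

lemma beta_supp_mono: "k \<le> l \<Longrightarrow> beta_supp k \<subseteq> beta_supp l"
proof (induction l rule: int_ge_induct)
  case (step l)
  have "beta_supp l = alpha_pow (l + 1) ` beta0_core" by (rule beta_supp_eq_core)
  also have "\<dots> \<subseteq> beta_supp (l + 1)" unfolding beta_supp_def using beta0_core_subset by (rule image_mono)
  finally show ?case using step.IH by blast
qed simp

lemma beta_fixes: "x \<in> unitI - beta_supp k \<Longrightarrow> beta k x = x"
proof -
  assume x: "x \<in> unitI - beta_supp k"
  let ?z = "(inv\<^bsub>SymI\<^esub> alpha_pow k) x"
  have z: "?z \<in> unitI" "alpha_pow k ?z = x"
    using BijGroup_inv_apply[OF alpha_pow_Bij] x by simp_all
  then have "?z \<notin> beta0_supp" using x unfolding beta_supp_def by (metis DiffD2 image_eqI)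
  then have "beta k (alpha_pow k ?z) = alpha_pow k ?z"
    using beta_alpha_pow[OF z(1)] beta0_fixes z(1) by simp
  then show "beta k x = x" using z(2) by simp
qed

lemma beta_maps_supp: "x \<in> beta_supp k \<Longrightarrow> beta k x \<in> beta_supp k"
  using beta_alpha_pow beta0_maps_supp beta0_supp_subset by (auto simp: beta_supp_def)

lemma beta_succ_moves_supp: "x \<in> beta_supp k \<Longrightarrow> beta (k + 1) x \<notin> beta_supp k"
proof
  assume "x \<in> beta_supp k" "beta (k + 1) x \<in> beta_supp k"
  then obtain z z' where z: "z \<in> beta0_core" "x = alpha_pow (k + 1) z"
    and z': "z' \<in> beta0_core" "beta (k + 1) x = alpha_pow (k + 1) z'"
    unfolding beta_supp_eq_core by blast
  have unit: "z \<in> unitI" "z' \<in> unitI" "beta0 z \<in> unitI"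
    using z(1) z'(1) beta0_core_subset beta0_supp_subset Bij_apply_closed[OF beta0_Bij] by blast+
  have "alpha_pow (k + 1) (beta0 z) = alpha_pow (k + 1) z'"
    using beta_alpha_pow[OF unit(1)] z(2) z'(2) by simp
  then have "beta0 z = z'" using Bij_inj[OF alpha_pow_Bij unit(3) unit(2)] by blast
  with z(1) z'(1) show False using beta0_moves_core by blast
qed

lemma beta_moves: "alpha_pow k (1/2) \<in> beta_supp k" "beta k (alpha_pow k (1/2)) \<noteq> alpha_pow k (1/2)"
proof -
  have half: "(1/2 :: real) \<in> unitI" "beta0 (1/2) \<in> unitI"
    using Bij_apply_closed[OF beta0_Bij] by (auto simp: unitI_def)
  show "alpha_pow k (1/2) \<in> beta_supp k" by (simp add: beta_supp_def beta0_supp_def)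
  show "beta k (alpha_pow k (1/2)) \<noteq> alpha_pow k (1/2)"
    using beta_alpha_pow[OF half(1)] Bij_inj[OF alpha_pow_Bij half(2) half(1)] beta0_half by auto
qed

fun comm_span :: "nat \<Rightarrow> int" where
  "comm_span 0 = 0"
| "comm_span (Suc n) = comm_span n + int n + 1"

fun beta_comm :: "nat \<Rightarrow> int \<Rightarrow> real \<Rightarrow> real" where
  "beta_comm 0 k = beta k"
| "beta_comm (Suc n) k = commutator SymI (beta_comm n k) (beta_comm n (k + int n + 1))"

lemma comm_span_nonneg: "0 \<le> comm_span n"
  by (induction n) auto

lemma comm_span_Suc_subset:
  assumes "{k..k + comm_span (Suc n)} \<subseteq> S"
  shows "{k..k + comm_span n} \<subseteq> S" "{k + int n + 1..k + int n + 1 + comm_span n} \<subseteq> S"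
  using assms comm_span_nonneg[of n] by auto

text \<open>\<open>beta_comm n (k + n + 1)\<close> acts as \<open>beta (k + n + 1)\<close> on \<open>beta_supp (k + n)\<close>, which
  contains the support of \<open>beta_comm n k\<close>, and moves it off itself; hence the commutator
  still agrees with \<open>beta k\<close> on \<open>beta_supp k\<close>.\<close>

lemma beta_comm_action:
  "beta_comm n k \<in> Bij unitI \<and> (\<forall>x \<in> beta_supp k. beta_comm n k x = beta k x)
     \<and> (\<forall>x \<in> unitI - beta_supp (k + int n). beta_comm n k x = x)"
proof (induction n arbitrary: k)
  case 0
  then show ?case using beta_Bij beta_fixes by simp
next
  case (Suc n)
  let ?f = "beta_comm n k" and ?g = "beta_comm n (k + int n + 1)"
  let ?S = "beta_supp (k + int n)" and ?T = "beta_supp (k + int n + 1)"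
  have f: "?f \<in> Bij unitI" "\<forall>x \<in> beta_supp k. ?f x = beta k x" "\<forall>x \<in> unitI - ?S. ?f x = x"
    using Suc.IH[of k] by blast+
  have g: "?g \<in> Bij unitI" "\<forall>x \<in> ?T. ?g x = beta (k + int n + 1) x"
    using Suc.IH[of "k + int n + 1"] by blast+
  have S_T: "?S \<subseteq> ?T" by (rule beta_supp_mono) simp
  have g_S: "\<forall>x \<in> ?S. ?g x \<notin> ?S"
    using g(2) S_T beta_succ_moves_supp[of _ "k + int n"] by (simp add: subset_iff)
  have gS_T: "?g ` ?S \<subseteq> ?T"
    using g(2) S_T beta_maps_supp by auto
  note comm = commutator_BijGroup_disjoint[OF f(1) g(1) beta_supp_subset f(3) g_S]
  have "beta_comm (Suc n) k \<in> Bij unitI"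
    using f(1) g(1) by (simp add: commutator_def Bij_mult_closed Bij_inv_closed)
  moreover have "\<forall>x \<in> beta_supp k. beta_comm (Suc n) k x = beta k x"
    using comm(1) f(2) beta_supp_mono[of k "k + int n"] by auto
  moreover have "\<forall>x \<in> unitI - ?T. beta_comm (Suc n) k x = x"
  proof
    fix x assume "x \<in> unitI - ?T"
    then have "x \<in> unitI - (?S \<union> ?g ` ?S)" using S_T gS_T by blast
    then have "commutator SymI ?f ?g x = x" using comm(2) by blast
    then show "beta_comm (Suc n) k x = x" by simp
  qed
  moreover have "k + int (Suc n) = k + int n + 1" by simp
  ultimately show ?case by (simp add: ac_simps)
qed

lemma beta_comm_nontrivial: "beta_comm n k \<noteq> \<one>\<^bsub>SymI\<^esub>"
proof
  assume one: "beta_comm n k = \<one>\<^bsub>SymI\<^esub>"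
  let ?p = "alpha_pow k (1/2)"
  have "?p \<in> unitI" using beta_moves(1) beta_supp_subset by blast
  then have "beta_comm n k ?p = ?p" by (simp add: one BijGroup_def)
  moreover have "beta_comm n k ?p = beta k ?p" using beta_comm_action beta_moves(1) by blast
  ultimately show False using beta_moves(2) by simp
qed

lemma subgroup_generate_beta: "subgroup (generate SymI (beta ` S)) SymI"
  by (rule group.generate_is_subgroup[OF group_BijGroup]) (auto simp: carrier_BijGroup beta_Bij)

lemma group_gen_by: "group (gen_by S)"
  unfolding gen_by_def by (rule subgroup.subgroup_is_group[OF subgroup_generate_beta group_BijGroup])

lemma carrier_gen_by: "carrier (gen_by S) = generate SymI (beta ` S)"
  by (simp add: gen_by_def)

lemma commutator_gen_by:
  "a \<in> carrier (gen_by S) \<Longrightarrow> b \<in> carrier (gen_by S) \<Longrightarrow>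
    commutator (gen_by S) a b = commutator SymI a b"
  using group.m_inv_consistent[OF group_BijGroup subgroup_generate_beta]
  by (simp add: commutator_def gen_by_def)

lemma beta_comm_in_gen_by: "{k..k + comm_span n} \<subseteq> S \<Longrightarrow> beta_comm n k \<in> carrier (gen_by S)"
proof (induction n arbitrary: k)
  case 0
  then show ?case by (auto simp: carrier_gen_by intro: generate.incl)
next
  case (Suc n)
  note ab = comm_span_Suc_subset[OF Suc.prems]
  have "beta_comm n k \<in> generate SymI (beta ` S)" "beta_comm n (k + int n + 1) \<in> generate SymI (beta ` S)"
    using Suc.IH[OF ab(1)] Suc.IH[OF ab(2)] by (simp_all add: carrier_gen_by)
  then show ?case
    using subgroup.m_closed[OF subgroup_generate_beta] subgroup.m_inv_closed[OF subgroup_generate_beta]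
    by (simp add: carrier_gen_by commutator_def)
qed

lemma beta_comm_in_derived:
  "{k..k + comm_span n} \<subseteq> S \<Longrightarrow> beta_comm n k \<in> (derived_set (gen_by S) ^^ n) (carrier (gen_by S))"
proof (induction n arbitrary: k)
  case 0
  then show ?case using beta_comm_in_gen_by[of k 0] by simp
next
  case (Suc n)
  note ab = comm_span_Suc_subset[OF Suc.prems]
  have "beta_comm (Suc n) k = commutator (gen_by S) (beta_comm n k) (beta_comm n (k + int n + 1))"
    using commutator_gen_by[OF beta_comm_in_gen_by beta_comm_in_gen_by, OF ab] by simp
  also have "\<dots> \<in> derived_set (gen_by S) ((derived_set (gen_by S) ^^ n) (carrier (gen_by S)))"
    by (rule commutator_in_derived_set[OF Suc.IH Suc.IH, OF ab])
  finally show ?case by simp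
qed

lemma beta_comm_killed:
  assumes \<rho>: "wmult_hom_on (gen_by S) (carrier (gen_by S)) \<rho>"
  shows "{k..k + comm_span n} \<subseteq> S \<Longrightarrow>
    \<rho> (beta k) = (\<lambda>_. 0) \<or> \<rho> (beta (k + comm_span n)) = (\<lambda>_. 0) \<Longrightarrow>
    \<rho> (beta_comm n k) = (\<lambda>_. 0)"
proof (induction n arbitrary: k)
  case 0
  then show ?case by auto
next
  case (Suc n)
  interpret group "gen_by S" by (rule group_gen_by)
  let ?a = "beta_comm n k" and ?b = "beta_comm n (k + int n + 1)"
  note ab = comm_span_Suc_subset[OF Suc.prems(1)]
  have mem: "?a \<in> carrier (gen_by S)" "?b \<in> carrier (gen_by S)"
    using beta_comm_in_gen_by ab by blast+
  have comm: "beta_comm (Suc n) k = commutator (gen_by S) ?a ?b"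
    using commutator_gen_by[OF mem] by simp
  from Suc.prems(2) show ?case
  proof
    assume "\<rho> (beta k) = (\<lambda>_. 0)"
    then have "\<rho> ?a = (\<lambda>_. 0)" using Suc.IH[OF ab(1)] by blast
    then show ?thesis using wmult_hom_on_commutator(1)[OF \<rho> mem(1) _ mem(2)] comm by simp
  next
    assume "\<rho> (beta (k + comm_span (Suc n))) = (\<lambda>_. 0)"
    then have "\<rho> (beta (k + int n + 1 + comm_span n)) = (\<lambda>_. 0)" by (simp add: algebra_simps)
    then have "\<rho> ?b = (\<lambda>_. 0)" using Suc.IH[OF ab(2)] by blast
    then show ?thesis using wmult_hom_on_commutator(2)[OF \<rho> mem(2) _ mem(1)] comm by simp
  qed
qed

lemma gen_by_not_embeds_Wsum:
  assumes "(\<forall>m \<ge> 0. {j..j + m} \<subseteq> S) \<or> (\<forall>m \<ge> 0. {j - m..j} \<subseteq> S)"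
  shows "\<not> embeds (gen_by S) Wsum"
proof -
  interpret group "gen_by S" by (rule group_gen_by)
  have "j \<in> S" using assms by fastforce
  then have j: "beta j \<in> carrier (gen_by S)" by (auto simp: carrier_gen_by intro: generate.incl)
  show ?thesis
  proof (rule not_embeds_Wsum[OF j])
    fix n
    obtain k where k: "{k..k + comm_span n} \<subseteq> S" "k = j \<or> k + comm_span n = j"
    proof (cases "\<forall>m \<ge> 0. {j..j + m} \<subseteq> S")
      case True
      then show ?thesis using that[of j] comm_span_nonneg[of n] by blast
    next
      case False
      then show ?thesis using that[of "j - comm_span n"] assms comm_span_nonneg[of n] by auto
    qed
    show "\<exists>t \<in> (derived_set (gen_by S) ^^ n) (carrier (gen_by S)). t \<noteq> \<one>\<^bsub>gen_by S\<^esub> \<and>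
      (\<forall>\<rho>. wmult_hom_on (gen_by S) (carrier (gen_by S)) \<rho> \<longrightarrow> \<rho> (beta j) = (\<lambda>_. 0) \<longrightarrow>
        \<rho> t = (\<lambda>_. 0))"
    proof (intro bexI conjI allI impI)
      show "beta_comm n k \<in> (derived_set (gen_by S) ^^ n) (carrier (gen_by S))"
        by (rule beta_comm_in_derived[OF k(1)])
      show "beta_comm n k \<noteq> \<one>\<^bsub>gen_by S\<^esub>" using beta_comm_nontrivial by (simp add: gen_by_def)
      fix \<rho> assume \<rho>: "wmult_hom_on (gen_by S) (carrier (gen_by S)) \<rho>" and "\<rho> (beta j) = (\<lambda>_. 0)"
      with k(2) have "\<rho> (beta k) = (\<lambda>_. 0) \<or> \<rho> (beta (k + comm_span n)) = (\<lambda>_. 0)"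
        by (elim disjE) simp_all
      then show "\<rho> (beta_comm n k) = (\<lambda>_. 0)" by (rule beta_comm_killed[OF \<rho> k(1)])
    qed
  qed
qed

theorem lemma21:
  shows "\<not> embeds wrZ_inf Wsum \<and> \<not> embeds Zwr_inf Wsum \<and> \<not> embeds wrZwr_inf Wsum"
proof (intro conjI)
  show "\<not> embeds wrZ_inf Wsum" unfolding wrZ_inf_def
    by (rule gen_by_not_embeds_Wsum[of "-1"]) auto
  show "\<not> embeds Zwr_inf Wsum" unfolding Zwr_inf_def
    by (rule gen_by_not_embeds_Wsum[of 0]) auto
  show "\<not> embeds wrZwr_inf Wsum" unfolding wrZwr_inf_def
    by (rule gen_by_not_embeds_Wsum[of 0]) auto
qed

end
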